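(* Let $f\in C^2(\mathbb T,\mathbb R)$ be non-degenerate and set $\underline{\eta}_f:=\min_{x}\eta_f(x)>0$. Then $$\mathcal H^0(\{f=0\})\le\frac1\pi\int_0^{2\pi}\frac{|f''(x)|}{\eta_f(x)}\,dx+2\le 2\Big(\frac{\|f''\|_\infty}{\underline{\eta}_f}+1\Big),$$ and also $$\mathcal H^0(\{f=0\})\le\frac12\int_0^{2\pi}\mathbf 1_{\{|f'(x)/f(x)|\le1\}}\frac{|f''(x)|}{|f(x)|}\,dx+\pi,$$ where the indicator is taken to be $0$ at points where $f(x)=0$.
   Context: $\mathbb T=\mathbb R/2\pi\mathbb Z$, functions on $\mathbb T$ are identified with $2\pi$-periodic functions on $\mathbb R$, and $\mathcal H^0(\{f=0\})$ is the number of zeros of $f$ in one period $[0,2\pi)$. $\eta_f(x):=\sqrt{f(x)^2+f'(x)^2}$; $f$ is non-degenerate if $\min_x\eta_f(x)>0$. $\|f''\|_\infty=\sup_x|f''(x)|$. *)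

theory Defs
  imports "HOL-Analysis.Analysis"
begin

text \<open>Functions on the torus are 2pi-periodic real functions.\<close>
definition periodic_2pi :: "(real \<Rightarrow> real) \<Rightarrow> bool" where
  "periodic_2pi f \<longleftrightarrow> (\<forall>x. f (x + 2*pi) = f x)"

definition C2 :: "(real \<Rightarrow> real) \<Rightarrow> bool" where
  "C2 f \<longleftrightarrow> (\<forall>x. f differentiable (at x)) \<and> (\<forall>x. deriv f differentiable (at x))
            \<and> continuous_on UNIV (deriv (deriv f))"

definition eta :: "(real \<Rightarrow> real) \<Rightarrow> real \<Rightarrow> real" where
  "eta f x = sqrt ((f x)\<^sup>2 + (deriv f x)\<^sup>2)"

definition eta_min :: "(real \<Rightarrow> real) \<Rightarrow> real" where
  "eta_min f = (INF x. eta f x)"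

definition sup_norm :: "(real \<Rightarrow> real) \<Rightarrow> real" where
  "sup_norm g = (SUP x. \<bar>g x\<bar>)"

definition zero_set :: "(real \<Rightarrow> real) \<Rightarrow> real set" where
  "zero_set f = {x \<in> {0..<2*pi}. f x = 0}"

definition log_integrand :: "(real \<Rightarrow> real) \<Rightarrow> real \<Rightarrow> real" where
  "log_integrand f x = (if f x \<noteq> 0 \<and> \<bar>deriv f x / f x\<bar> \<le> 1
      then \<bar>deriv (deriv f) x\<bar> / \<bar>f x\<bar> else 0)"

end

(*
  Between two consecutive zeros u < v of f, both simple, the logarithmic derivative w = f'/f
  runs from +infinity at u to -infinity at v.  Hence the angle arctan w drops by pi on (u, v),
  while its derivative (f f'' - f'^2) / (f^2 + f'^2) is at least -1 - |f''| / eta_f; integrating,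
  pi <= (v - u) + (integral of |f''| / eta_f over [u, v]).  Likewise w crosses the band |w| <= 1
  downwards on a subinterval, where the Riccati identity -w' = w^2 - f''/f <= 1 + |f''| / |f|
  gives 2 <= (v - u) + (integral of the second density).  Adding these bounds over the gaps of
  one period, whose lengths sum to 2 pi, bounds the number of zeros; the remaining inequality is
  the pointwise bound |f''| / eta_f <= sup |f''| / min eta_f.
*)

theory Submission
  imports Defs "HOL-Library.Periodic_Fun"
begin

lemma simple_zero_log_deriv_tendsto:
  fixes f f' :: "real \<Rightarrow> real"
  assumes "(f has_real_derivative f' z) (at z)" and "isCont f' z"
    and "f z = 0" and "f' z \<noteq> 0"
  shows "((\<lambda>x. f' x * (x - z) / f x) \<longlongrightarrow> 1) (at z)"
proof -
  have "((\<lambda>x. f x / (x - z)) \<longlongrightarrow> f' z) (at z)"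
    using assms(1,3) unfolding has_field_derivative_iff by simp
  moreover have "(f' \<longlongrightarrow> f' z) (at z)"
    using assms(2) by (simp add: isCont_def)
  ultimately have "((\<lambda>x. f' x / (f x / (x - z))) \<longlongrightarrow> f' z / f' z) (at z)"
    using assms(4) by (intro tendsto_divide)
  then show ?thesis
    using assms(4) by simp
qed

lemma simple_zero_isolated:
  fixes f f' :: "real \<Rightarrow> real"
  assumes "(f has_real_derivative f' z) (at z)" and "isCont f' z"
    and "f z = 0" and "f' z \<noteq> 0"
  shows "\<forall>\<^sub>F x in at z. f x \<noteq> 0"
proof -
  have "\<forall>\<^sub>F x in at z. 0 < f' x * (x - z) / f x"
    using order_tendstoD(1)[OF simple_zero_log_deriv_tendsto[OF assms]] by simp
  \<comment> \<open>the quotient is 0 wherever f x = 0, since division by zero yields 0\<close>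
  then show ?thesis
    by eventually_elim auto
qed

lemma log_deriv_at_right_simple_zero:
  fixes f f' :: "real \<Rightarrow> real"
  assumes "(f has_real_derivative f' z) (at z)" and "isCont f' z"
    and "f z = 0" and "f' z \<noteq> 0"
  shows "filterlim (\<lambda>x. f' x / f x) at_top (at_right z)"
proof -
  have lim: "filterlim (\<lambda>x. f' x * (x - z) / f x * inverse (x - z)) at_top (at_right z)"
  proof (rule filterlim_tendsto_pos_mult_at_top)
    show "((\<lambda>x. f' x * (x - z) / f x) \<longlongrightarrow> 1) (at_right z)"
      using simple_zero_log_deriv_tendsto[OF assms] by (rule tendsto_mono[OF at_le, rotated]) simp
    show "filterlim (\<lambda>x. inverse (x - z)) at_top (at_right z)"
      by (rule filterlim_inverse_at_top)
        (auto intro!: tendsto_eq_intros eventually_mono[OF eventually_at_right_less])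
  qed simp
  have eq: "\<forall>\<^sub>F x in at_right z. f' x * (x - z) / f x * inverse (x - z) = f' x / f x"
    by (rule eventually_mono[OF eventually_at_right_less]) (simp add: divide_inverse)
  show ?thesis
    using filterlim_cong[OF refl refl eq] lim by simp
qed

lemma log_deriv_at_left_simple_zero:
  fixes f f' :: "real \<Rightarrow> real"
  assumes "(f has_real_derivative f' z) (at z)" and "isCont f' z"
    and "f z = 0" and "f' z \<noteq> 0"
  shows "filterlim (\<lambda>x. f' x / f x) at_bot (at_left z)"
proof -
  have lim: "filterlim (\<lambda>x. f' x * (x - z) / f x * inverse (x - z)) at_bot (at_left z)"
  proof (rule filterlim_tendsto_pos_mult_at_bot)
    show "((\<lambda>x. f' x * (x - z) / f x) \<longlongrightarrow> 1) (at_left z)"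
      using simple_zero_log_deriv_tendsto[OF assms] by (rule tendsto_mono[OF at_le, rotated]) simp
    show "filterlim (\<lambda>x. inverse (x - z)) at_bot (at_left z)"
      by (rule filterlim_inverse_at_bot)
        (auto intro!: tendsto_eq_intros simp: eventually_at_filter)
  qed simp
  have eq: "\<forall>\<^sub>F x in at_left z. f' x * (x - z) / f x * inverse (x - z) = f' x / f x"
    by (simp add: eventually_at_filter divide_inverse)
  show ?thesis
    using filterlim_cong[OF refl refl eq] lim by simp
qed

lemma log_deriv_swing_between_zeros:
  fixes f f' :: "real \<Rightarrow> real"
  assumes deriv: "\<And>x. (f has_real_derivative f' x) (at x)" and cont: "\<And>x. isCont f' x"
    and simple: "\<And>x. f x = 0 \<Longrightarrow> f' x \<noteq> 0"
    and "u < v" and zero_u: "f u = 0" and zero_v: "f v = 0"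
  shows "\<exists>p q. u < p \<and> p < q \<and> q < v \<and> M \<le> f' p / f p \<and> f' q / f q \<le> - M"
proof -
  define m where "m = (u + v) / 2"
  have "\<forall>\<^sub>F x in at_right u. M \<le> f' x / f x \<and> x \<in> {u<..<m}"
    using log_deriv_at_right_simple_zero[OF deriv cont zero_u simple[OF zero_u]] \<open>u < v\<close>
    unfolding filterlim_at_top m_def by (intro eventually_conj eventually_at_right_real) auto
  then obtain p where p: "M \<le> f' p / f p" "p \<in> {u<..<m}"
    using eventually_happens'[OF trivial_limit_at_right_real] by blast
  have "\<forall>\<^sub>F x in at_left v. f' x / f x \<le> - M \<and> x \<in> {m<..<v}"
    using log_deriv_at_left_simple_zero[OF deriv cont zero_v simple[OF zero_v]] \<open>u < v\<close>
    unfolding filterlim_at_bot m_def by (intro eventually_conj eventually_at_left_real) auto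
  then obtain q where q: "f' q / f q \<le> - M" "q \<in> {m<..<v}"
    using eventually_happens'[OF trivial_limit_at_left_real] by blast
  show ?thesis
    using p q by (intro exI[of _ p] exI[of _ q]) auto
qed

lemma finite_simple_zeros:
  fixes f f' :: "real \<Rightarrow> real"
  assumes deriv: "\<And>x. (f has_real_derivative f' x) (at x)" and cont: "\<And>x. isCont f' x"
    and simple: "\<And>x. f x = 0 \<Longrightarrow> f' x \<noteq> 0"
  shows "finite {x \<in> {a..b}. f x = 0}"
proof (rule ccontr)
  define T where "T = {x \<in> {a..b}. f x = 0}"
  assume "infinite {x \<in> {a..b}. f x = 0}"
  then obtain z where "z \<in> {a..b}" and z: "z islimpt T"
    using compact_eq_Bolzano_Weierstrass[of "{a..b}"] unfolding T_def by auto
  have "continuous_on UNIV f"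
    using deriv by (meson DERIV_isCont continuous_at_imp_continuous_on)
  then have "closed {x. f x = 0}"
    by (rule closed_Collect_eq[OF _ continuous_on_const])
  moreover have "z islimpt {x. f x = 0}"
    using z by (rule islimpt_subset) (auto simp: T_def)
  ultimately have zero_z: "f z = 0"
    using closed_limpt by blast
  have "\<forall>\<^sub>F x in at z. f x \<noteq> 0"
    by (rule simple_zero_isolated[OF deriv cont zero_z simple[OF zero_z]])
  then have "\<forall>\<^sub>F x in at z. x \<notin> T"
    by (rule eventually_mono) (simp add: T_def)
  then show False
    using z islimpt_iff_eventually by blast
qed

lemma first_level_crossing:
  fixes w :: "real \<Rightarrow> real"
  assumes cont: "continuous_on {p..q} w" and "p \<le> q" and "c \<le> w p" and "w q \<le> c"
  shows "\<exists>x\<in>{p..q}. w x = c \<and> (\<forall>y\<in>{p..x}. c \<le> w y)"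
proof -
  define T where "T = {p..q} \<inter> w -` {..c}"
  have "closed T"
    unfolding T_def by (rule continuous_closed_preimage[OF cont]) auto
  moreover have "q \<in> T" and below: "bdd_below T"
    using assms by (auto simp: T_def intro: bdd_belowI[of _ p])
  ultimately have "Inf T \<in> T"
    using closed_contains_Inf by blast
  define x where "x = Inf T"
  have x: "x \<in> {p..q}" "w x \<le> c"
    using \<open>Inf T \<in> T\<close> by (auto simp: x_def T_def)
  have above: "c < w y" if "y \<in> {p..<x}" for y
    using that x cInf_lower[OF _ below, of y] by (force simp: x_def T_def)
  obtain y where "p \<le> y" "y \<le> x" "w y = c"
    using IVT2'[of w x c p] x \<open>c \<le> w p\<close> continuous_on_subset[OF cont, of "{p..x}"] by auto
  then have "w x = c"
    using above[of y] by force
  moreover have "c \<le> w y" if "y \<in> {p..x}" for y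
    using that above[of y] \<open>w x = c\<close> by (cases "y = x") auto
  ultimately show ?thesis
    using x by blast
qed

lemma unit_band_crossing:
  fixes w :: "real \<Rightarrow> real"
  assumes cont: "continuous_on {p..q} w" and "p \<le> q" and "1 \<le> w p" and "w q \<le> -1"
  shows "\<exists>x1 x2. p \<le> x1 \<and> x1 \<le> x2 \<and> x2 \<le> q \<and> w x1 = 1 \<and> w x2 = -1
    \<and> (\<forall>x\<in>{x1..x2}. \<bar>w x\<bar> \<le> 1)"
proof -
  have "-1 \<le> w p"
    using assms by linarith
  then obtain x2 where x2: "x2 \<in> {p..q}" "w x2 = -1" and ge: "\<forall>y\<in>{p..x2}. -1 \<le> w y"
    using first_level_crossing[OF cont \<open>p \<le> q\<close> _ \<open>w q \<le> -1\<close>] by blast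
  \<comment> \<open>the last crossing of level 1 before x2 is a first crossing of t \<mapsto> - w (- t)\<close>
  have "continuous_on {-x2..-p} (\<lambda>t. - w (- t))"
    using x2 by (intro continuous_intros continuous_on_compose2[OF cont]) auto
  then obtain t where t: "t \<in> {-x2..-p}" "w (- t) = 1" and le: "\<forall>s\<in>{-x2..t}. w (- s) \<le> 1"
    using first_level_crossing[of "-x2" "-p" "\<lambda>t. - w (- t)" "-1"] x2 \<open>1 \<le> w p\<close> by auto
  have "\<bar>w x\<bar> \<le> 1" if x: "x \<in> {-t..x2}" for x
  proof -
    have "-1 \<le> w x"
      using ge x t by auto
    moreover have "w x \<le> 1"
      using le[rule_format, of "-x"] x by auto
    ultimately show ?thesis
      by linarith
  qed
  then show ?thesis
    using x2 t by (intro exI[of _ "-t"] exI[of _ x2]) auto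
qed

lemma decrease_le_length_plus_integral:
  fixes \<phi> \<phi>' g :: "real \<Rightarrow> real"
  assumes deriv: "\<And>x. x \<in> {p..q} \<Longrightarrow> (\<phi> has_real_derivative \<phi>' x) (at x)"
    and bound: "\<And>x. x \<in> {p..q} \<Longrightarrow> - \<phi>' x \<le> 1 + g x"
    and int: "g integrable_on {u..v}" and nonneg: "\<And>x. 0 \<le> g x"
    and "u \<le> p" "p \<le> q" "q \<le> v"
  shows "\<phi> p - \<phi> q \<le> (v - u) + integral {u..v} g"
proof -
  have "(\<phi>' has_integral \<phi> q - \<phi> p) {p..q}"
    using \<open>p \<le> q\<close> deriv
    by (intro fundamental_theorem_of_calculus)
      (auto simp: has_real_derivative_iff_has_vector_derivative[symmetric] intro: has_field_derivative_at_within)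
  then have neg: "((\<lambda>x. - \<phi>' x) has_integral \<phi> p - \<phi> q) {p..q}"
    using has_integral_neg by force
  have int_pq: "g integrable_on {p..q}"
    using integrable_on_subinterval[OF int] assms by auto
  have const: "((\<lambda>x. 1 + g x) has_integral (q - p) + integral {p..q} g) {p..q}"
    using has_integral_add[OF has_integral_const_real[of 1 p q] integrable_integral[OF int_pq]] \<open>p \<le> q\<close>
    by simp
  have "\<phi> p - \<phi> q \<le> (q - p) + integral {p..q} g"
    by (rule has_integral_le[OF neg const bound])
  moreover have "integral {p..q} g \<le> integral {u..v} g"
    using assms by (intro integral_subset_le[OF _ int_pq int]) auto
  ultimately show ?thesis
    using assms by linarith
qed

lemma arctan_quotient_has_real_derivative:
  fixes f f' :: "real \<Rightarrow> real"
  assumes "(f has_real_derivative f' x) (at x)" and "(f' has_real_derivative f'' x) (at x)"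
    and "f x \<noteq> 0"
  shows "((\<lambda>y. arctan (f' y / f y)) has_real_derivative
           (f'' x * f x - (f' x)\<^sup>2) / ((f x)\<^sup>2 + (f' x)\<^sup>2)) (at x)"
proof -
  have "((\<lambda>y. arctan (f' y / f y)) has_real_derivative
           inverse (1 + (f' x / f x)\<^sup>2) * ((f'' x * f x - f' x * f' x) / (f x)\<^sup>2)) (at x)"
    using DERIV_chain2[OF DERIV_arctan DERIV_quotient[OF assms(2,1,3)]] by (simp add: numeral_2_eq_2)
  moreover have "(f x)\<^sup>2 + (f' x)\<^sup>2 > 0"
    using assms(3) by (simp add: add_pos_nonneg)
  then have "inverse (1 + (f' x / f x)\<^sup>2) * ((f'' x * f x - f' x * f' x) / (f x)\<^sup>2)
      = (f'' x * f x - (f' x)\<^sup>2) / ((f x)\<^sup>2 + (f' x)\<^sup>2)"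
    using assms(3) by (simp add: divide_simps) (simp add: algebra_simps power2_eq_square)
  ultimately show ?thesis
    by (rule DERIV_cong)
qed

lemma minus_angle_slope_le:
  fixes a b c :: real
  assumes "0 < a\<^sup>2 + b\<^sup>2"
  shows "- ((c * a - b\<^sup>2) / (a\<^sup>2 + b\<^sup>2)) \<le> 1 + \<bar>c\<bar> / sqrt (a\<^sup>2 + b\<^sup>2)"
proof -
  define r where "r = sqrt (a\<^sup>2 + b\<^sup>2)"
  have "0 < r" and r2: "r\<^sup>2 = a\<^sup>2 + b\<^sup>2"
    using assms by (simp_all add: r_def)
  have "b\<^sup>2 \<le> r\<^sup>2"
    using r2 by simp
  then have "b\<^sup>2 / r\<^sup>2 \<le> 1"
    using \<open>0 < r\<close> by simp
  moreover have "\<bar>a\<bar> \<le> r"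
    unfolding r_def by (rule real_le_rsqrt) simp
  then have "- (c * a) \<le> \<bar>c\<bar> * r"
    by (metis abs_ge_minus_self abs_ge_zero abs_mult mult_left_mono order_trans)
  then have "- (c * a) / r\<^sup>2 \<le> \<bar>c\<bar> / r"
    using \<open>0 < r\<close> by (simp add: power2_eq_square divide_simps)
  moreover have "- ((c * a - b\<^sup>2) / r\<^sup>2) = b\<^sup>2 / r\<^sup>2 + - (c * a) / r\<^sup>2"
    by (simp add: diff_divide_distrib)
  ultimately have "- ((c * a - b\<^sup>2) / r\<^sup>2) \<le> 1 + \<bar>c\<bar> / r"
    by linarith
  then show ?thesis
    by (simp add: r2 r_def)
qed

lemma minus_log_deriv_slope_le:
  fixes a b c :: real
  assumes "a \<noteq> 0" and "\<bar>b / a\<bar> \<le> 1"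
  shows "- ((c * a - b\<^sup>2) / a\<^sup>2) \<le> 1 + \<bar>c\<bar> / \<bar>a\<bar>"
proof -
  have "(b / a)\<^sup>2 \<le> 1"
    using assms(2) by (simp add: abs_square_le_1)
  moreover have "- (c / a) \<le> \<bar>c\<bar> / \<bar>a\<bar>"
    by (metis abs_divide abs_ge_minus_self)
  ultimately have "(b / a)\<^sup>2 - c / a \<le> 1 + \<bar>c\<bar> / \<bar>a\<bar>"
    by linarith
  moreover have "- ((c * a - b\<^sup>2) / a\<^sup>2) = (b / a)\<^sup>2 - c / a"
    using assms(1) by (simp add: field_simps power2_eq_square)
  ultimately show ?thesis
    by simp
qed

lemma increment_ge_card_mult:
  fixes Z :: "real set" and G :: "real \<Rightarrow> real"
  assumes "finite Z" and "a \<in> Z" and "b \<in> Z" and "Z \<subseteq> {a..b}"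
    and step: "\<And>u v. u \<in> Z \<Longrightarrow> v \<in> Z \<Longrightarrow> u < v \<Longrightarrow> {u<..<v} \<inter> Z = {} \<Longrightarrow> c \<le> G v - G u"
  shows "(real (card Z) - 1) * c \<le> G b - G a"
proof -
  define xs where "xs = sorted_list_of_set Z"
  define n where "n = card Z - 1"
  have set_xs: "set xs = Z" and sorted: "sorted_wrt (<) xs"
    using \<open>finite Z\<close> by (simp_all add: xs_def)
  have "card Z > 0"
    using \<open>finite Z\<close> \<open>a \<in> Z\<close> card_gt_0_iff by blast
  then have len: "length xs = Suc n"
    by (simp add: xs_def n_def)
  have le_nth: "xs ! i \<le> xs ! j" if "i \<le> j" "j < length xs" for i j
    using that sorted_wrt_nth_less[OF sorted, of i j] by (cases "i = j") auto
  have first: "xs ! 0 = a"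
  proof -
    obtain j where "j < length xs" "xs ! j = a"
      using \<open>a \<in> Z\<close> unfolding set_xs[symmetric] in_set_conv_nth by auto
    moreover have "a \<le> xs ! 0"
      using \<open>Z \<subseteq> {a..b}\<close> nth_mem[of 0 xs] len set_xs by auto
    ultimately show ?thesis
      using le_nth[of 0 j] by simp
  qed
  have last: "xs ! n = b"
  proof -
    obtain j where "j < length xs" "xs ! j = b"
      using \<open>b \<in> Z\<close> unfolding set_xs[symmetric] in_set_conv_nth by auto
    moreover have "xs ! n \<le> b"
      using \<open>Z \<subseteq> {a..b}\<close> nth_mem[of n xs] len set_xs by auto
    ultimately show ?thesis
      using le_nth[of j n] len by simp
  qed
  have "c \<le> G (xs ! Suc i) - G (xs ! i)" if "i < n" for i
  proof (rule step)
    show "xs ! i \<in> Z" "xs ! Suc i \<in> Z" "xs ! i < xs ! Suc i"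
      using that len set_xs sorted_wrt_nth_less[OF sorted, of i "Suc i"] by auto
    show "{xs ! i<..<xs ! Suc i} \<inter> Z = {}"
    proof (rule ccontr)
      assume "{xs ! i<..<xs ! Suc i} \<inter> Z \<noteq> {}"
      then obtain z where "z \<in> set xs" "z \<in> {xs ! i<..<xs ! Suc i}"
        using set_xs by blast
      then obtain j where "j < length xs" "xs ! j \<in> {xs ! i<..<xs ! Suc i}"
        unfolding in_set_conv_nth by blast
      then show False
        using le_nth[of j i] le_nth[of "Suc i" j] that len by (cases "j \<le> i") auto
    qed
  qed
  then have "real n * c \<le> (\<Sum>i<n. G (xs ! Suc i) - G (xs ! i))"
    using sum_bounded_below[of "{..<n}" c] by simp
  also have "\<dots> = G b - G a"
    using sum_lessThan_telescope[of "\<lambda>i. G (xs ! i)" n] first last by simp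
  finally show ?thesis
    using \<open>card Z > 0\<close> by (simp add: n_def of_nat_diff)
qed

lemma zero_count_in_interval_bound:
  fixes f g :: "real \<Rightarrow> real"
  assumes finite: "finite {x \<in> {a..b}. f x = 0}" and "a \<le> b" and "f a = 0" and "f b = 0"
    and int: "g integrable_on {a..b}"
    and gap: "\<And>u v. u < v \<Longrightarrow> f u = 0 \<Longrightarrow> f v = 0 \<Longrightarrow> (\<And>x. x \<in> {u<..<v} \<Longrightarrow> f x \<noteq> 0)
                \<Longrightarrow> c \<le> (v - u) + integral {u..v} g"
  shows "(real (card {x \<in> {a..b}. f x = 0}) - 1) * c \<le> (b - a) + integral {a..b} g"
proof -
  define G where "G x = x + integral {a..x} g" for x
  have G_diff: "G v - G u = (v - u) + integral {u..v} g" if "a \<le> u" "u \<le> v" "v \<le> b" for u v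
    using Henstock_Kurzweil_Integration.integral_combine[OF that(1,2) integrable_on_subinterval[OF int]] that
    by (simp add: G_def)
  have "(real (card {x \<in> {a..b}. f x = 0}) - 1) * c \<le> G b - G a"
  proof (rule increment_ge_card_mult[where G = G])
    fix u v
    assume uv: "u \<in> {x \<in> {a..b}. f x = 0}" "v \<in> {x \<in> {a..b}. f x = 0}" "u < v"
      and "{u<..<v} \<inter> {x \<in> {a..b}. f x = 0} = {}"
    then have "f x \<noteq> 0" if "x \<in> {u<..<v}" for x
      using that by auto
    then show "c \<le> G v - G u"
      using gap[OF \<open>u < v\<close>] G_diff uv by auto
  qed (use finite assms in auto)
  then show ?thesis
    using G_diff[of a b] \<open>a \<le> b\<close> by simp
qed

lemma periodic_derivative:
  fixes g g' :: "real \<Rightarrow> real"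
  assumes periodic: "\<And>x. g (x + T) = g x" and deriv: "\<And>x. (g has_real_derivative g' x) (at x)"
  shows "g' (x + T) = g' x"
proof -
  have "((\<lambda>y. g (y + T)) has_real_derivative g' (x + T)) (at x)"
    using deriv[of "x + T"] by (simp add: DERIV_shift)
  then have "(g has_real_derivative g' (x + T)) (at x)"
    using periodic by simp
  then show ?thesis
    using deriv DERIV_unique by blast
qed

lemma periodic_continuous_bdd_above_abs:
  fixes g :: "real \<Rightarrow> real"
  assumes periodic: "\<And>x. g (x + T) = g x" and "T > 0" and cont: "continuous_on UNIV g"
  shows "bdd_above (range (\<lambda>x. \<bar>g x\<bar>))"
proof -
  interpret periodic_fun_simple g T
    by standard (rule periodic)
  have "g x \<in> g ` {0..T}" for x
  proof -
    define k where "k = \<lfloor>x / T\<rfloor>"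
    have "of_int k * T \<le> x" "x \<le> (of_int k + 1) * T"
      using \<open>T > 0\<close> by (simp_all add: k_def flip: pos_le_divide_eq pos_divide_le_eq)
    then have "x - of_int k * T \<in> {0..T}"
      by (simp add: algebra_simps)
    moreover have "g (x - of_int k * T) = g x"
      by (rule minus_of_int)
    ultimately show ?thesis
      by (metis image_eqI)
  qed
  moreover have "bounded (g ` {0..T})"
    by (intro compact_imp_bounded compact_continuous_image continuous_on_subset[OF cont]) auto
  ultimately have "bounded (range g)"
    by (metis bounded_subset image_subsetI)
  then show ?thesis
    unfolding bounded_iff by (auto intro: bdd_aboveI2)
qed

lemma integral_periodic_shift:
  fixes g :: "real \<Rightarrow> real"
  assumes periodic: "\<And>x. g (x + T) = g x" and int: "\<And>a b. g integrable_on {a..b}"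
    and "0 \<le> z" and "z \<le> T"
  shows "integral {z..z + T} g = integral {0..T} g"
proof -
  have "integral {T..z + T} g = integral {T - T..z + T - T} (\<lambda>x. g (x + T))"
    by (rule integral_shift_real_ivl[symmetric])
  also have "\<dots> = integral {0..z} g"
    using periodic by simp
  finally have "integral {T..z + T} g = integral {0..z} g" .
  moreover have "integral {z..T} g + integral {T..z + T} g = integral {z..z + T} g"
    using assms by (intro Henstock_Kurzweil_Integration.integral_combine int) auto
  moreover have "integral {0..z} g + integral {z..T} g = integral {0..T} g"
    using assms by (intro Henstock_Kurzweil_Integration.integral_combine int) auto
  ultimately show ?thesis
    by linarith
qed

lemma zeros_from_first_zero_over_period:
  fixes f :: "real \<Rightarrow> real"
  assumes periodic: "\<And>x. f (x + 2*pi) = f x" and "finite (zero_set f)" and "zero_set f \<noteq> {}"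
  defines "z0 \<equiv> Min (zero_set f)"
  shows "{x \<in> {z0..z0 + 2*pi}. f x = 0} = insert (z0 + 2*pi) (zero_set f)"
proof -
  have S: "y \<in> zero_set f \<longleftrightarrow> 0 \<le> y \<and> y < 2*pi \<and> f y = 0" for y
    by (simp add: zero_set_def)
  have "z0 \<in> zero_set f" and z0_le: "\<And>y. y \<in> zero_set f \<Longrightarrow> z0 \<le> y"
    using assms by (simp_all add: z0_def)
  show ?thesis
  proof (intro equalityI subsetI)
    fix x
    assume x: "x \<in> {x \<in> {z0..z0 + 2*pi}. f x = 0}"
    show "x \<in> insert (z0 + 2*pi) (zero_set f)"
    proof (rule ccontr)
      assume "x \<notin> insert (z0 + 2*pi) (zero_set f)"
      \<comment> \<open>then x lies in [2 pi, z0 + 2 pi) and shifts to a zero below the first zero z0\<close>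
      then have "x - 2*pi \<in> zero_set f" and "x - 2*pi < z0"
        using x S periodic[of "x - 2*pi"] \<open>z0 \<in> zero_set f\<close> by auto
      then show False
        using z0_le by force
    qed
  next
    fix x
    assume "x \<in> insert (z0 + 2*pi) (zero_set f)"
    then show "x \<in> {x \<in> {z0..z0 + 2*pi}. f x = 0}"
      using S z0_le periodic[of z0] \<open>z0 \<in> zero_set f\<close> by force
  qed
qed

lemma periodic_zero_count_bound:
  fixes f g :: "real \<Rightarrow> real"
  assumes periodic: "\<And>x. f (x + 2*pi) = f x" and finite: "finite (zero_set f)"
    and g_periodic: "\<And>x. g (x + 2*pi) = g x" and nonneg: "\<And>x. 0 \<le> g x"
    and int: "\<And>a b. g integrable_on {a..b}"
    and gap: "\<And>u v. u < v \<Longrightarrow> f u = 0 \<Longrightarrow> f v = 0 \<Longrightarrow> (\<And>x. x \<in> {u<..<v} \<Longrightarrow> f x \<noteq> 0)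
                \<Longrightarrow> c \<le> (v - u) + integral {u..v} g"
  shows "real (card (zero_set f)) * c \<le> 2*pi + integral {0..2*pi} g"
proof (cases "zero_set f = {}")
  case True
  then show ?thesis
    using integral_nonneg[OF int nonneg, of 0 "2*pi"] pi_gt_zero by simp
next
  case False
  define z0 where "z0 = Min (zero_set f)"
  have "z0 \<in> zero_set f"
    using finite False by (simp add: z0_def)
  then have z0: "0 \<le> z0" "z0 \<le> 2*pi" "f z0 = 0" "z0 + 2*pi \<notin> zero_set f"
    by (auto simp: zero_set_def)
  have zeros: "{x \<in> {z0..z0 + 2*pi}. f x = 0} = insert (z0 + 2*pi) (zero_set f)"
    unfolding z0_def using periodic finite False by (rule zeros_from_first_zero_over_period)
  have "(real (card {x \<in> {z0..z0 + 2*pi}. f x = 0}) - 1) * c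
      \<le> (z0 + 2*pi - z0) + integral {z0..z0 + 2*pi} g"
  proof (rule zero_count_in_interval_bound)
    show "finite {x \<in> {z0..z0 + 2*pi}. f x = 0}"
      unfolding zeros using finite by simp
  qed (use periodic[of z0] z0 int gap in auto)
  also have "\<dots> = 2*pi + integral {0..2*pi} g"
    using integral_periodic_shift[OF g_periodic int] z0 by simp
  finally show ?thesis
    using z0 finite unfolding zeros by simp
qed

locale simple_zeros_C2 =
  fixes f f' f'' :: "real \<Rightarrow> real"
  assumes has_derivative_f: "\<And>x. (f has_real_derivative f' x) (at x)"
    and has_derivative_f': "\<And>x. (f' has_real_derivative f'' x) (at x)"
    and isCont_f'': "\<And>x. isCont f'' x"
    and simple_zeros: "\<And>x. f x = 0 \<Longrightarrow> f' x \<noteq> 0"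
begin

lemma isCont_f: "isCont f x"
  using has_derivative_f by (rule DERIV_isCont)

lemma isCont_f': "isCont f' x"
  using has_derivative_f' by (rule DERIV_isCont)

lemma sum_squares_pos: "0 < (f x)\<^sup>2 + (f' x)\<^sup>2"
  using simple_zeros[of x] by (cases "f x = 0") (auto simp: add_pos_nonneg)

definition angle_density :: "real \<Rightarrow> real" where
  "angle_density x = \<bar>f'' x\<bar> / sqrt ((f x)\<^sup>2 + (f' x)\<^sup>2)"

definition log_density :: "real \<Rightarrow> real" where
  "log_density x = (if f x \<noteq> 0 \<and> \<bar>f' x / f x\<bar> \<le> 1 then \<bar>f'' x\<bar> / \<bar>f x\<bar> else 0)"

lemma angle_density_nonneg: "0 \<le> angle_density x"
  by (simp add: angle_density_def)

lemma log_density_nonneg: "0 \<le> log_density x"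
  by (simp add: log_density_def)

lemma angle_density_integrable: "angle_density integrable_on {a..b}"
proof -
  have "isCont angle_density x" for x
    unfolding angle_density_def using sum_squares_pos[of x]
    by (intro continuous_intros isCont_f isCont_f' isCont_f'') (use simple_zeros[of x] in auto)
  then show ?thesis
    by (intro integrable_continuous_real continuous_at_imp_continuous_on) blast
qed

lemma log_density_integrable: "log_density integrable_on {a..b}"
proof -
  \<comment> \<open>on the closed set where the indicator is 1, the density agrees with a continuous function\<close>
  define C where "C = {x. \<bar>f' x\<bar> \<le> \<bar>f x\<bar>}"
  define h where "h x = \<bar>f'' x\<bar> / max \<bar>f x\<bar> \<bar>f' x\<bar>" for x
  have max_pos: "0 < max \<bar>f x\<bar> \<bar>f' x\<bar>" for x
    using simple_zeros[of x] by (cases "f x = 0") auto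
  have cont_h: "continuous_on UNIV h"
    unfolding h_def using max_pos
    by (intro continuous_at_imp_continuous_on ballI continuous_intros isCont_f isCont_f' isCont_f'')
      (metis less_irrefl)
  have "closed C"
    unfolding C_def
    by (intro closed_Collect_le continuous_intros continuous_at_imp_continuous_on ballI isCont_f isCont_f')
  have log_density_eq: "log_density = (\<lambda>x. if x \<in> C then h x else 0)"
  proof
    fix x
    show "log_density x = (if x \<in> C then h x else 0)"
      using simple_zeros[of x]
      by (cases "f x = 0") (auto simp: log_density_def C_def h_def abs_divide divide_le_eq_1 max_def)
  qed
  have "(\<lambda>x. if x \<in> C then h x else 0) \<in> borel_measurable borel"
    using \<open>closed C\<close> cont_h by (intro borel_measurable_continuous_on_if) (auto intro: continuous_on_subset)
  then have "(\<lambda>x. if x \<in> C then h x else 0) \<in> borel_measurable (lebesgue_on {a..b})"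
    by (metis measurable_lborel2 measurable_restrict_space1 measurable_completion)
  moreover have "h integrable_on {a..b}"
    by (rule integrable_continuous_real[OF continuous_on_subset[OF cont_h]]) simp
  ultimately show ?thesis
    unfolding log_density_eq
    by (rule measurable_bounded_by_integrable_imp_integrable_real) (auto simp: h_def)
qed

lemma finite_zeros: "finite {x \<in> {a..b}. f x = 0}"
  by (rule finite_simple_zeros[OF has_derivative_f isCont_f' simple_zeros])

lemma pi_le_zero_gap_plus_angle_integral:
  assumes "u < v" and "f u = 0" and "f v = 0" and nonzero: "\<And>x. x \<in> {u<..<v} \<Longrightarrow> f x \<noteq> 0"
  shows "pi \<le> (v - u) + integral {u..v} angle_density"
proof -
  define R where "R = (v - u) + integral {u..v} angle_density"
  have arctan_le: "2 * arctan M \<le> R" if "M > 0" for M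
  proof -
    obtain p q where pq: "u < p" "p < q" "q < v" "M \<le> f' p / f p" "f' q / f q \<le> - M"
      using log_deriv_swing_between_zeros[OF has_derivative_f isCont_f' simple_zeros] assms by blast
    have "arctan (f' p / f p) - arctan (f' q / f q) \<le> R"
      unfolding R_def
    proof (rule decrease_le_length_plus_integral[where \<phi> = "\<lambda>y. arctan (f' y / f y)"])
      fix x
      assume "x \<in> {p..q}"
      then have "f x \<noteq> 0"
        using nonzero pq by auto
      then show "((\<lambda>y. arctan (f' y / f y)) has_real_derivative
          (f'' x * f x - (f' x)\<^sup>2) / ((f x)\<^sup>2 + (f' x)\<^sup>2)) (at x)"
        by (rule arctan_quotient_has_real_derivative[OF has_derivative_f has_derivative_f'])
      show "- ((f'' x * f x - (f' x)\<^sup>2) / ((f x)\<^sup>2 + (f' x)\<^sup>2)) \<le> 1 + angle_density x"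
        unfolding angle_density_def by (rule minus_angle_slope_le[OF sum_squares_pos])
    qed (use pq angle_density_integrable angle_density_nonneg in auto)
    moreover have "arctan M \<le> arctan (f' p / f p)" and "arctan (f' q / f q) \<le> - arctan M"
      using pq by (simp_all add: arctan_le_iff flip: arctan_minus)
    ultimately show ?thesis
      by linarith
  qed
  have "\<forall>\<^sub>F M in at_top. 2 * arctan M \<le> R"
    using eventually_gt_at_top[of 0] by (rule eventually_mono) (rule arctan_le)
  moreover have "((\<lambda>M. 2 * arctan M) \<longlongrightarrow> 2 * (pi / 2)) at_top"
    by (intro tendsto_intros tendsto_arctan_at_top)
  ultimately have "2 * (pi / 2) \<le> R"
    using tendsto_le[OF trivial_limit_at_top_linorder tendsto_const] by blast
  then show ?thesis
    by (simp add: R_def)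
qed

lemma two_le_zero_gap_plus_log_integral:
  assumes "u < v" and "f u = 0" and "f v = 0" and nonzero: "\<And>x. x \<in> {u<..<v} \<Longrightarrow> f x \<noteq> 0"
  shows "2 \<le> (v - u) + integral {u..v} log_density"
proof -
  define w where "w x = f' x / f x" for x
  obtain p q where pq: "u < p" "p < q" "q < v" "1 \<le> w p" "w q \<le> - 1"
    using log_deriv_swing_between_zeros[OF has_derivative_f isCont_f' simple_zeros] assms
    unfolding w_def by blast
  have nonzero_pq: "f x \<noteq> 0" if "x \<in> {p..q}" for x
    using nonzero pq that by auto
  have "continuous_on {p..q} w"
    unfolding w_def using nonzero_pq
    by (intro continuous_at_imp_continuous_on ballI continuous_intros isCont_f isCont_f') auto
  then obtain x1 x2 where x12: "p \<le> x1" "x1 \<le> x2" "x2 \<le> q" "w x1 = 1" "w x2 = -1"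
    and band: "\<And>x. x \<in> {x1..x2} \<Longrightarrow> \<bar>w x\<bar> \<le> 1"
    using unit_band_crossing pq by (metis less_imp_le)
  have "w x1 - w x2 \<le> (v - u) + integral {u..v} log_density"
  proof (rule decrease_le_length_plus_integral[where \<phi> = w])
    fix x
    assume x: "x \<in> {x1..x2}"
    then have "f x \<noteq> 0"
      using nonzero_pq x12 by auto
    then show "(w has_real_derivative (f'' x * f x - f' x * f' x) / (f x)\<^sup>2) (at x)"
      unfolding w_def using DERIV_quotient[OF has_derivative_f' has_derivative_f]
      by (simp add: numeral_2_eq_2)
    show "- ((f'' x * f x - f' x * f' x) / (f x)\<^sup>2) \<le> 1 + log_density x"
      using minus_log_deriv_slope_le[OF \<open>f x \<noteq> 0\<close>, of "f' x" "f'' x"] band[OF x] \<open>f x \<noteq> 0\<close>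
      by (simp add: log_density_def w_def power2_eq_square)
  qed (use pq x12 log_density_integrable log_density_nonneg in auto)
  then show ?thesis
    using x12 by simp
qed

end

locale periodic_simple_zeros_C2 = simple_zeros_C2 +
  assumes periodic: "\<And>x. f (x + 2*pi) = f x"
begin

lemma periodic_f': "f' (x + 2*pi) = f' x"
  by (rule periodic_derivative[OF periodic has_derivative_f])

lemma periodic_f'': "f'' (x + 2*pi) = f'' x"
  by (rule periodic_derivative[OF periodic_f' has_derivative_f'])

lemma finite_zero_set: "finite (zero_set f)"
  by (rule finite_subset[OF _ finite_zeros[of 0 "2*pi"]]) (auto simp: zero_set_def)

lemma zero_count_le_angle_integral:
  "real (card (zero_set f)) \<le> (1/pi) * integral {0..2*pi} angle_density + 2"
proof -
  have "real (card (zero_set f)) * pi \<le> 2*pi + integral {0..2*pi} angle_density"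
    using periodic periodic_f' periodic_f'' pi_le_zero_gap_plus_angle_integral
    by (intro periodic_zero_count_bound finite_zero_set angle_density_nonneg angle_density_integrable)
      (simp_all add: angle_density_def)
  then show ?thesis
    by (simp add: field_simps)
qed

lemma zero_count_le_log_integral:
  "real (card (zero_set f)) \<le> (1/2) * integral {0..2*pi} log_density + pi"
proof -
  have "real (card (zero_set f)) * 2 \<le> 2*pi + integral {0..2*pi} log_density"
    using periodic periodic_f' periodic_f'' two_le_zero_gap_plus_log_integral
    by (intro periodic_zero_count_bound finite_zero_set log_density_nonneg log_density_integrable)
      (simp_all add: log_density_def)
  then show ?thesis
    by simp
qed

end

lemma integral_div_le_sup_norm_div:
  fixes h e :: "real \<Rightarrow> real"
  assumes bdd: "bdd_above (range (\<lambda>x. \<bar>h x\<bar>))" and "0 < m" and "\<And>x. m \<le> e x"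
    and int: "(\<lambda>x. \<bar>h x\<bar> / e x) integrable_on {0..T}" and "0 \<le> T"
  shows "integral {0..T} (\<lambda>x. \<bar>h x\<bar> / e x) \<le> T * (sup_norm h / m)"
proof -
  have "\<bar>h x\<bar> / e x \<le> sup_norm h / m" for x
  proof -
    have "\<bar>h x\<bar> \<le> sup_norm h"
      unfolding sup_norm_def by (rule cSup_upper[OF rangeI bdd])
    then have "\<bar>h x\<bar> / e x \<le> sup_norm h / e x"
      using \<open>0 < m\<close> assms(3)[of x] by (simp add: divide_right_mono)
    also have "\<dots> \<le> sup_norm h / m"
      using \<open>0 < m\<close> assms(3)[of x] \<open>\<bar>h x\<bar> \<le> sup_norm h\<close> by (intro divide_left_mono) auto
    finally show ?thesis .
  qed
  then have "integral {0..T} (\<lambda>x. \<bar>h x\<bar> / e x) \<le> integral {0..T} (\<lambda>x. sup_norm h / m)"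
    by (intro integral_le int) auto
  then show ?thesis
    using \<open>0 \<le> T\<close> by simp
qed

lemma eta_min_le_eta: "eta_min f \<le> eta f x"
  unfolding eta_min_def by (rule cInf_lower) (auto intro: bdd_belowI[of _ 0] simp: eta_def)

lemma periodic_simple_zeros_C2_deriv:
  assumes "periodic_2pi f" and "C2 f" and "0 < eta_min f"
  shows "periodic_simple_zeros_C2 f (deriv f) (deriv (deriv f))"
proof unfold_locales
  fix x
  show "(f has_real_derivative deriv f x) (at x)" and "(deriv f has_real_derivative deriv (deriv f) x) (at x)"
    using assms(2) by (simp_all add: C2_def DERIV_deriv_iff_real_differentiable)
  show "isCont (deriv (deriv f)) x"
    using assms(2) by (simp add: C2_def continuous_on_eq_continuous_at)
  show "f (x + 2*pi) = f x"
    using assms(1) by (simp add: periodic_2pi_def)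
  assume "f x = 0"
  then show "deriv f x \<noteq> 0"
    using eta_min_le_eta[of f x] assms(3) by (auto simp: eta_def)
qed

theorem corollary2:
  fixes f :: "real \<Rightarrow> real"
  assumes "periodic_2pi f" and "C2 f" and "eta_min f > 0"
  shows "finite (zero_set f)
    \<and> (\<lambda>x. \<bar>deriv (deriv f) x\<bar> / eta f x) integrable_on {0..2*pi}
    \<and> real (card (zero_set f))
        \<le> (1/pi) * integral {0..2*pi} (\<lambda>x. \<bar>deriv (deriv f) x\<bar> / eta f x) + 2
    \<and> (1/pi) * integral {0..2*pi} (\<lambda>x. \<bar>deriv (deriv f) x\<bar> / eta f x) + 2
        \<le> 2 * (sup_norm (deriv (deriv f)) / eta_min f + 1)
    \<and> log_integrand f integrable_on {0..2*pi}
    \<and> real (card (zero_set f))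
        \<le> (1/2) * integral {0..2*pi} (log_integrand f) + pi"
proof -
  interpret periodic_simple_zeros_C2 f "deriv f" "deriv (deriv f)"
    using assms by (rule periodic_simple_zeros_C2_deriv)
  have angle: "angle_density = (\<lambda>x. \<bar>deriv (deriv f) x\<bar> / eta f x)"
    by (simp add: fun_eq_iff angle_density_def eta_def)
  have log: "log_density = log_integrand f"
    by (simp add: fun_eq_iff log_density_def log_integrand_def)
  have "continuous_on UNIV (deriv (deriv f))"
    by (intro continuous_at_imp_continuous_on ballI isCont_f'')
  then have "integral {0..2*pi} angle_density \<le> 2*pi * (sup_norm (deriv (deriv f)) / eta_min f)"
    unfolding angle using assms(3) eta_min_le_eta angle_density_integrable[unfolded angle]
    by (intro integral_div_le_sup_norm_div periodic_continuous_bdd_above_abs[where g = "deriv (deriv f)", OF periodic_f'']) auto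
  then have "(1/pi) * integral {0..2*pi} angle_density + 2 \<le> 2 * (sup_norm (deriv (deriv f)) / eta_min f + 1)"
    by (simp add: field_simps)
  then show ?thesis
    using finite_zero_set angle_density_integrable log_density_integrable
      zero_count_le_angle_integral zero_count_le_log_integral
    unfolding angle log by blast
qed

end
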